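(* Let $k$ be a positive integer and $S=K[x_1,\ldots,x_n]$. Then: if $n=4k$, $V(n,2)=\bigcup_{0\le i\le\sqrt k}W_{2k-i}$; if $n=4k+1$ with $k\neq 1$, $V(n,2)=\bigcup_{0\le i\le(\sqrt{1+4k}-1)/2}W_{2k-i}$; if $n=5$, $V(5,2)=W_2\cup C_5$; and if $n=4k+2$ or $n=4k+3$, $V(n,2)=\emptyset$. (Here $i$ ranges over integers.)
   Context: $K$ is a field; $G(I)$ is the minimal monomial generating set of a monomial ideal $I$. With $\sigma$ the bijection $x_{i_1}\cdots x_{i_k}\mapsto\{i_1,\ldots,i_k\}$, the facet complex $\delta_{\mathcal{F}}(I)$ has facets $\sigma(g)$, $g\in G(I)$, the Stanley–Reisner complex is $\delta_{\mathcal{N}}(I)=\{\sigma(g)\mid g\text{ square-free monomial},\ g\notin I\}$, and a square-free monomial ideal $I$ is an $f$-ideal if both have the same $f$-vector. $V(n,2)$ is the set of $f$-ideals of $S$ all of whose minimal generators have degree 2. For a nonempty proper $B\subset[n]$ with complement $\overline B$, $W_B=\{x_ix_j\mid i\ne j,\ i,j\in B\text{ or } i,j\in\overline B\}$; such an $f$-ideal $I$ is of $l$ type if $W_B\subseteq G(I)$ for some $B$ with $|B|=l$, and $W_l$ is the set of $f$-ideals of $S$ of $l$ type. For $n=5$, $C_5$ denotes the set of ideals of $K[x_1,\ldots,x_5]$ generated by $\{x_ix_j\mid v_iv_j\in E(T)\}$ where $T$ ranges over the cycles of length 5 on the vertex set $\{v_1,\ldots,v_5\}$ (for example $\langle x_1x_2,x_2x_3,x_3x_4,x_4x_5,x_1x_5\rangle$).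 *)

theory Defs
  imports Complex_Main
begin

text \<open>A square-free monomial ideal of S = K[x_1,...,x_n] is represented by its minimal
monomial generating set G(I), each square-free monomial x_{i_1}...x_{i_k} being identified
with its support set sigma(g) = {i_1,...,i_k} (a subset of {1..n}).  A set of supports is
the minimal generating set of a square-free monomial ideal iff it is an antichain.
A square-free monomial m lies in I iff some minimal generator divides m, i.e. iff
sigma(g) is contained in sigma(m) for some g in G(I).\<close>

definition sqfree_gens :: "nat \<Rightarrow> nat set set \<Rightarrow> bool" where
  "sqfree_gens n G \<longleftrightarrow> finite G \<and> (\<forall>g\<in>G. g \<subseteq> {1..n}) \<and>
     (\<forall>g\<in>G. \<forall>h\<in>G. g \<subseteq> h \<longrightarrow> g = h)"

definition facet_complex :: "nat set set \<Rightarrow> nat set set" where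
  "facet_complex G = {F. \<exists>g\<in>G. F \<subseteq> g}"

definition SR_complex :: "nat \<Rightarrow> nat set set \<Rightarrow> nat set set" where
  "SR_complex n G = {F. F \<subseteq> {1..n} \<and> \<not> (\<exists>g\<in>G. g \<subseteq> F)}"

text \<open>f-vector: f_{d-1} = number of faces with d vertices (d \<ge> 1).\<close>
definition fvec :: "nat set set \<Rightarrow> nat \<Rightarrow> nat" where
  "fvec \<Delta> d = card {F\<in>\<Delta>. card F = Suc d}"

definition is_f_ideal :: "nat \<Rightarrow> nat set set \<Rightarrow> bool" where
  "is_f_ideal n G \<longleftrightarrow> sqfree_gens n G \<and>
     (\<forall>d. fvec (facet_complex G) d = fvec (SR_complex n G) d)"

definition V2 :: "nat \<Rightarrow> nat set set set" where
  "V2 n = {G. is_f_ideal n G \<and> (\<forall>g\<in>G. card g = 2)}"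

definition W_set :: "nat \<Rightarrow> nat set \<Rightarrow> nat set set" where
  "W_set n B = {{i, j} | i j. i \<noteq> j \<and>
     ((i \<in> B \<and> j \<in> B) \<or> (i \<in> {1..n} - B \<and> j \<in> {1..n} - B))}"

definition W_type :: "nat \<Rightarrow> nat \<Rightarrow> nat set set set" where
  "W_type n l = {G \<in> V2 n. \<exists>B. B \<subseteq> {1..n} \<and> B \<noteq> {} \<and> B \<noteq> {1..n} \<and>
      card B = l \<and> W_set n B \<subseteq> G}"

definition C5 :: "nat set set set" where
  "C5 = {G. \<exists>p. bij_betw p {1..5::nat} {1..5} \<and>
      G = (\<lambda>i. {p i, p (i mod 5 + 1)}) ` {1..5}}"

end

theory Submission
  imports Defs
begin

(* Since all generators are quadratic, G is in V(n,2) iff G is a graph on [n] that covers every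
   vertex, has half of the C(n,2) possible edges and meets every 3-subset; i.e. the complement
   graph H has n(n-1)/4 edges and no triangle.  If some edge uv of H has deg u + deg v >= n,
   then N(u) and N(v) partition [n] and every edge of H crosses B = N(u), so W_B is contained
   in G; counting edges of H across the cut gives n(n-1) <= 4|B|(n-|B|), i.e. (n-2|B|)^2 <= n.
   Otherwise summing deg u + deg v over the edges of H bounds the sum of squared degrees, and
   together with the edge count this forces H to be regular of degree (n-1)/2.  A triangle-free
   graph of this kind has at most 5 vertices, and on 5 vertices it is a pentagon whose complement
   is again a pentagon.  For n = 4k+2 and n = 4k+3 the number C(n,2) is odd. *)

locale triangle_free_graph =
  fixes V :: "'a set" and adj :: "'a \<Rightarrow> 'a \<Rightarrow> bool"
  assumes finite_V: "finite V"
    and adj_in_V: "adj x y \<Longrightarrow> x \<in> V"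
    and adj_sym: "adj x y \<Longrightarrow> adj y x"
    and adj_irrefl: "\<not> adj x x"
    and triangle_free: "\<not> (adj x y \<and> adj y z \<and> adj x z)"
begin

definition nbr :: "'a \<Rightarrow> 'a set" where
  "nbr x = {y. adj x y}"

definition deg :: "'a \<Rightarrow> nat" where
  "deg x = card (nbr x)"

definition arcs :: "('a \<times> 'a) set" where
  "arcs = {(x, y). adj x y}"

lemma mem_nbr_iff [simp]: "y \<in> nbr x \<longleftrightarrow> adj x y"
  by (simp add: nbr_def)

lemma adj_in_V': "adj x y \<Longrightarrow> y \<in> V"
  using adj_in_V adj_sym by blast

lemma nbr_subset_V: "nbr x \<subseteq> V"
  using adj_in_V' by auto

lemma finite_nbr [simp]: "finite (nbr x)"
  using finite_subset[OF nbr_subset_V finite_V] .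

lemma nbr_disjoint: "adj u v \<Longrightarrow> nbr u \<inter> nbr v = {}"
  using triangle_free[of u v] by auto

lemma arcs_eq_Sigma: "arcs = Sigma V nbr"
  using adj_in_V by (auto simp: arcs_def)

lemma sum_deg_eq_card_arcs: "(\<Sum>x\<in>V. deg x) = card arcs"
  by (simp add: arcs_eq_Sigma deg_def finite_V)

lemma sum_deg_squared:
  "2 * (\<Sum>x\<in>V. deg x ^ 2) = (\<Sum>(x, y)\<in>arcs. deg x + deg y)"
proof -
  have "(\<Sum>(x, y)\<in>arcs. deg x) = (\<Sum>x\<in>V. \<Sum>y\<in>nbr x. deg x)"
    unfolding arcs_eq_Sigma by (rule sum.Sigma[symmetric]) (auto simp: finite_V)
  also have "\<dots> = (\<Sum>x\<in>V. deg x ^ 2)"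
    by (simp add: deg_def power2_eq_square)
  finally have first: "(\<Sum>(x, y)\<in>arcs. deg x) = (\<Sum>x\<in>V. deg x ^ 2)" .
  have swap: "(\<Sum>(x, y)\<in>arcs. deg y) = (\<Sum>(x, y)\<in>arcs. deg x)"
    by (rule sum.reindex_bij_witness[of _ prod.swap prod.swap]) (auto simp: arcs_def intro: adj_sym)
  have "(\<Sum>(x, y)\<in>arcs. deg x + deg y) = (\<Sum>(x, y)\<in>arcs. deg x) + (\<Sum>(x, y)\<in>arcs. deg y)"
    by (simp add: sum.distrib case_prod_unfold)
  with first swap show ?thesis
    by linarith
qed

lemma card_arcs_le_cut:
  assumes "B \<subseteq> V" and cross: "\<And>x y. adj x y \<Longrightarrow> x \<in> B \<longleftrightarrow> y \<notin> B"
  shows "card arcs \<le> 2 * card B * (card V - card B)"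
proof -
  have "arcs \<subseteq> B \<times> (V - B) \<union> (V - B) \<times> B"
    using cross adj_in_V adj_in_V' unfolding arcs_def by blast
  moreover have "finite (B \<times> (V - B) \<union> (V - B) \<times> B)"
    using finite_V finite_subset[OF assms(1)] by blast
  ultimately have "card arcs \<le> card (B \<times> (V - B) \<union> (V - B) \<times> B)"
    by (rule card_mono[rotated])
  also have "\<dots> \<le> card (B \<times> (V - B)) + card ((V - B) \<times> B)"
    by (rule card_Un_le)
  also have "\<dots> = 2 * card B * (card V - card B)"
    using assms(1) finite_V by (simp add: card_cartesian_product card_Diff_subset finite_subset)
  finally show ?thesis .
qed

lemma sum_deg_squared_le_if_light:
  assumes light: "\<And>x y. adj x y \<Longrightarrow> deg x + deg y < card V"
  shows "2 * (\<Sum>x\<in>V. deg x ^ 2) \<le> card arcs * (card V - 1)"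
proof -
  have "2 * (\<Sum>x\<in>V. deg x ^ 2) = (\<Sum>(x, y)\<in>arcs. deg x + deg y)"
    by (rule sum_deg_squared)
  also have "\<dots> \<le> (\<Sum>p\<in>arcs. card V - 1)"
  proof (rule sum_mono)
    fix p assume "p \<in> arcs"
    then obtain x y where "p = (x, y)" "adj x y"
      by (auto simp: arcs_def)
    then show "(case p of (x, y) \<Rightarrow> deg x + deg y) \<le> card V - 1"
      using light[of x y] by simp
  qed
  finally show ?thesis
    by simp
qed

lemma regular_if_light_edges:
  assumes half: "2 * card arcs = card V * (card V - 1)"
    and light: "\<And>x y. adj x y \<Longrightarrow> deg x + deg y < card V"
    and "x \<in> V"
  shows "2 * deg x + 1 = card V"
proof -
  define n where "n = card V"
  define c :: int where "c = int n - 1"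
  define D :: int where "D = (\<Sum>x\<in>V. int (deg x))"
  define S :: int where "S = (\<Sum>x\<in>V. int (deg x) ^ 2)"
  have "n > 0"
    using \<open>x \<in> V\<close> finite_V card_gt_0_iff n_def by auto
  then have n_minus_1: "int (n - 1) = c"
    by (simp add: c_def)
  have D: "D = int (card arcs)"
    unfolding D_def sum_deg_eq_card_arcs[symmetric] by simp
  have "int (2 * (\<Sum>x\<in>V. deg x ^ 2)) \<le> int (card arcs * (n - 1))"
    using sum_deg_squared_le_if_light[OF light] unfolding n_def by (simp only: of_nat_le_iff)
  then have S_le: "2 * S \<le> D * c"
    by (simp add: S_def D n_minus_1[symmetric])
  have "int (2 * card arcs) = int (n * (n - 1))"
    using half by (simp add: n_def)
  then have nc: "int n * c = 2 * D"
    by (simp add: D n_minus_1[symmetric])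
  have "(\<Sum>x\<in>V. (2 * int (deg x) - c) ^ 2) = 4 * S - 4 * (D * c) + (int n * c) * c"
    by (simp add: S_def D_def n_def power2_eq_square algebra_simps sum.distrib sum_subtractf
        sum_distrib_left)
  also have "\<dots> \<le> 0"
    using S_le unfolding nc by simp
  finally have "(\<Sum>x\<in>V. (2 * int (deg x) - c) ^ 2) = 0"
    by (simp add: antisym sum_nonneg)
  then have "(2 * int (deg x) - c) ^ 2 = 0"
    using \<open>x \<in> V\<close> finite_V by (subst (asm) sum_nonneg_eq_0_iff) auto
  then show ?thesis
    unfolding n_def[symmetric] c_def by simp
qed

lemma deg_adj_sum_le_card_V:
  assumes "adj u v"
  shows "deg u + deg v \<le> card V"
proof -
  have "deg u + deg v = card (nbr u \<union> nbr v)"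
    using nbr_disjoint[OF assms] by (simp add: deg_def card_Un_disjoint)
  also have "\<dots> \<le> card V"
    using nbr_subset_V by (intro card_mono finite_V) auto
  finally show ?thesis .
qed

lemma nbr_bipartition:
  assumes uv: "adj u v" and heavy: "card V \<le> deg u + deg v" and xy: "adj x y"
  shows "x \<in> nbr u \<longleftrightarrow> y \<notin> nbr u"
proof -
  have "card (nbr u \<union> nbr v) = card V"
    using nbr_disjoint[OF uv] heavy deg_adj_sum_le_card_V[OF uv]
    by (simp add: deg_def card_Un_disjoint)
  then have "nbr u \<union> nbr v = V"
    using nbr_subset_V by (intro card_subset_eq finite_V) auto
  moreover have "x \<in> V" "y \<in> V"
    using xy adj_in_V adj_in_V' by auto
  moreover have "\<not> (x \<in> nbr w \<and> y \<in> nbr w)" for w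
    using triangle_free[of w x y] xy by auto
  ultimately show ?thesis
    using nbr_disjoint[OF uv] by (metis Un_iff)
qed

lemma half_dense_cases:
  assumes half: "2 * card arcs = card V * (card V - 1)"
  obtains B where "B \<subseteq> V" "B \<noteq> {}" "B \<noteq> V" "2 * card B \<le> card V"
      "\<And>x y. adj x y \<Longrightarrow> x \<in> B \<longleftrightarrow> y \<notin> B"
      "card V * (card V - 1) \<le> 4 * card B * (card V - card B)"
  | "\<And>x. x \<in> V \<Longrightarrow> 2 * deg x + 1 = card V"
proof (cases "\<exists>u v. adj u v \<and> card V \<le> deg u + deg v \<and> deg u \<le> deg v")
  case True
  then obtain u v where uv: "adj u v" "card V \<le> deg u + deg v" "deg u \<le> deg v"
    by blast
  let ?B = "nbr u"
  have "2 * card ?B \<le> card V"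
    using uv deg_adj_sum_le_card_V[OF uv(1)] by (simp add: deg_def)
  moreover have cross: "\<And>x y. adj x y \<Longrightarrow> x \<in> ?B \<longleftrightarrow> y \<notin> ?B"
    using nbr_bipartition[OF uv(1,2)] .
  moreover have "card V * (card V - 1) \<le> 4 * card ?B * (card V - card ?B)"
    using card_arcs_le_cut[OF nbr_subset_V cross] half by linarith
  moreover have "?B \<noteq> {}" "?B \<noteq> V"
    using uv(1) adj_in_V[OF uv(1)] adj_irrefl by auto
  ultimately show thesis
    by (intro that(1)[OF nbr_subset_V]) simp_all
next
  case False
  then have no_heavy: "deg u + deg v < card V" if "adj u v" "deg u \<le> deg v" for u v
    using that by (meson not_le)
  have "deg x + deg y < card V" if "adj x y" for x y
    using no_heavy[OF that] no_heavy[OF adj_sym[OF that]] nat_le_linear[of "deg x" "deg y"]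
    by (auto simp: add.commute)
  then show thesis
    by (intro that(2) regular_if_light_edges[OF half])
qed

lemma card_nbr_inter_le_1:
  assumes reg: "\<And>x. x \<in> V \<Longrightarrow> deg x = m" and uv: "adj u v"
    and V: "V = insert w (nbr u \<union> nbr v)" and x: "x \<in> nbr w \<inter> nbr u"
  shows "card (nbr w \<inter> nbr v) \<le> 1"
proof -
  have sub: "nbr x \<subseteq> insert w (nbr v - nbr w)"
  proof
    fix z assume "z \<in> nbr x"
    then have "z \<in> V" "z \<notin> nbr u" "z \<notin> nbr w"
      using x adj_in_V' triangle_free[of u x z] triangle_free[of w x z] by auto
    then show "z \<in> insert w (nbr v - nbr w)"
      using V by blast
  qed
  have "deg x \<le> card (insert w (nbr v - nbr w))"
    unfolding deg_def by (rule card_mono[OF _ sub]) simp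
  also have "\<dots> \<le> card (nbr v - nbr w) + 1"
    by (simp add: card_insert_if)
  also have "card (nbr v - nbr w) = deg v - card (nbr w \<inter> nbr v)"
    by (simp add: deg_def card_Diff_subset_Int Int_commute)
  finally have "deg x \<le> deg v - card (nbr w \<inter> nbr v) + 1" .
  moreover have "card (nbr w \<inter> nbr v) \<le> deg v"
    unfolding deg_def by (intro card_mono) auto
  moreover have "deg x = m" "deg v = m"
    using x uv reg adj_in_V' by auto
  ultimately show ?thesis
    by linarith
qed

lemma nbr_eq_pair:
  assumes "deg z = 2" and "x \<in> nbr z" "y \<in> nbr z" "x \<noteq> y"
  shows "nbr z = {x, y}"
  using assms card_subset_eq[of "nbr z" "{x, y}"] by (simp add: deg_def)

lemma half_regular_vertex_outside:
  assumes half_reg: "\<And>x. x \<in> V \<Longrightarrow> 2 * deg x + 1 = card V" and uv: "adj u v"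
  obtains w where "V = insert w (nbr u \<union> nbr v)" "w \<notin> nbr u" "w \<notin> nbr v"
proof -
  have "card (nbr u \<union> nbr v) = deg u + deg v"
    using nbr_disjoint[OF uv] by (simp add: deg_def card_Un_disjoint)
  also have "\<dots> + 1 = card V"
    using half_reg[OF adj_in_V[OF uv]] half_reg[OF adj_in_V'[OF uv]] by simp
  finally have "card (V - (nbr u \<union> nbr v)) = 1"
    using nbr_subset_V by (simp add: card_Diff_subset)
  then obtain w where "V - (nbr u \<union> nbr v) = {w}"
    by (rule card_1_singletonE)
  then show thesis
    using that nbr_subset_V by blast
qed

lemma half_regular_nbr_meets_both:
  assumes half_reg: "\<And>x. x \<in> V \<Longrightarrow> 2 * deg x + 1 = card V" and uv: "adj u v"
    and V: "V = insert w (nbr u \<union> nbr v)" "w \<notin> nbr u" "w \<notin> nbr v"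
  shows "card (nbr w \<inter> nbr u) + card (nbr w \<inter> nbr v) = deg u"
    and "nbr w \<inter> nbr u \<noteq> {}" and "nbr w \<inter> nbr v \<noteq> {}"
proof -
  have u: "u \<in> V" and v: "v \<in> V"
    using uv adj_in_V adj_in_V' by auto
  have deg_eq: "deg x = deg u" if "x \<in> V" for x
    using half_reg[OF that] half_reg[OF u] by simp
  have "(nbr w \<inter> nbr u) \<union> (nbr w \<inter> nbr v) = nbr w"
    using V nbr_subset_V[of w] adj_irrefl[of w] by auto
  moreover have "card ((nbr w \<inter> nbr u) \<union> (nbr w \<inter> nbr v))
      = card (nbr w \<inter> nbr u) + card (nbr w \<inter> nbr v)"
    using nbr_disjoint[OF uv] by (intro card_Un_disjoint) auto
  ultimately show split: "card (nbr w \<inter> nbr u) + card (nbr w \<inter> nbr v) = deg u"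
    using deg_eq[of w] V(1) by (simp add: deg_def)
  have "v \<notin> nbr w" "u \<notin> nbr w"
    using V(2,3) adj_sym[of w v] adj_sym[of w u] by auto
  then have "card (nbr w \<inter> nbr u) < deg u" "card (nbr w \<inter> nbr v) < deg v"
    using uv adj_sym[OF uv] by (auto simp: deg_def intro!: psubset_card_mono)
  then show "nbr w \<inter> nbr u \<noteq> {}" "nbr w \<inter> nbr v \<noteq> {}"
    using split deg_eq[OF v] by auto
qed

lemma card_V_le_5_if_half_regular:
  assumes half_reg: "\<And>x. x \<in> V \<Longrightarrow> 2 * deg x + 1 = card V"
  shows "card V \<le> 5"
proof (cases "\<exists>u v. adj u v")
  case False
  then have "deg x = 0" for x
    by (simp add: deg_def nbr_def)
  then show ?thesis
    using half_reg by (cases "V = {}") auto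
next
  case True
  then obtain u v where uv: "adj u v"
    by blast
  obtain w where V: "V = insert w (nbr u \<union> nbr v)" "w \<notin> nbr u" "w \<notin> nbr v"
    using half_reg uv by (rule half_regular_vertex_outside)
  obtain x y where x: "x \<in> nbr w \<inter> nbr u" and y: "y \<in> nbr w \<inter> nbr v"
    using half_regular_nbr_meets_both(2,3)[OF half_reg uv V] by blast
  have reg: "deg z = deg u" if "z \<in> V" for z
    using half_reg[OF that] half_reg[OF adj_in_V[OF uv]] by simp
  have "card (nbr w \<inter> nbr v) \<le> 1"
    using card_nbr_inter_le_1[OF reg uv V(1) x] .
  moreover have "card (nbr w \<inter> nbr u) \<le> 1"
    using card_nbr_inter_le_1[OF reg adj_sym[OF uv] _ y] V(1) by (simp add: Un_commute)
  ultimately show ?thesis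
    using half_regular_nbr_meets_both(1)[OF half_reg uv V] half_reg[OF adj_in_V[OF uv]]
    by linarith
qed

lemma five_cycle:
  assumes card_V: "card V = 5" and reg: "\<And>x. x \<in> V \<Longrightarrow> deg x = 2"
  obtains a b c d e where "distinct [a, b, c, d, e]" "V = {a, b, c, d, e}"
    "nbr a = {e, b}" "nbr b = {a, c}" "nbr c = {b, d}" "nbr d = {c, e}" "nbr e = {d, a}"
proof -
  have half_reg: "\<And>x. x \<in> V \<Longrightarrow> 2 * deg x + 1 = card V"
    using reg card_V by simp
  obtain u where u: "u \<in> V"
    using card_V by fastforce
  then have "nbr u \<noteq> {}"
    using reg[OF u] by (auto simp: deg_def)
  then obtain v where uv: "adj u v"
    by auto
  obtain w where V: "V = insert w (nbr u \<union> nbr v)" "w \<notin> nbr u" "w \<notin> nbr v"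
    using half_reg uv by (rule half_regular_vertex_outside)
  obtain x y where x: "adj w x" "adj u x" and y: "adj w y" "adj v y"
    using half_regular_nbr_meets_both(2,3)[OF half_reg uv V] by auto
  have "\<not> adj w v" "\<not> adj w u"
    using V(2,3) adj_sym[of w v] adj_sym[of w u] by auto
  moreover have "x \<noteq> y"
    using x(2) y(2) nbr_disjoint[OF uv] by auto
  ultimately have distinct: "distinct [u, v, y, w, x]"
    using x y uv adj_sym[OF uv] adj_irrefl by auto
  have w: "w \<in> V" and x_V: "x \<in> V" and y_V: "y \<in> V"
    using x y adj_in_V adj_in_V' by auto
  have "nbr u = {x, v}"
    by (rule nbr_eq_pair[OF reg[OF u]]) (use x uv distinct in auto)
  moreover have "nbr v = {u, y}"
    by (rule nbr_eq_pair[OF reg[OF adj_in_V'[OF uv]]]) (use adj_sym[OF uv] y distinct in auto)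
  moreover have "nbr y = {v, w}"
    by (rule nbr_eq_pair[OF reg[OF y_V]]) (use adj_sym[OF y(1)] adj_sym[OF y(2)] distinct in auto)
  moreover have "nbr w = {y, x}"
    by (rule nbr_eq_pair[OF reg[OF w]]) (use x y distinct in auto)
  moreover have "nbr x = {w, u}"
    by (rule nbr_eq_pair[OF reg[OF x_V]]) (use adj_sym[OF x(1)] adj_sym[OF x(2)] distinct in auto)
  moreover have "V = {u, v, y, w, x}"
    using V(1) calculation by auto
  ultimately show thesis
    using that[OF distinct] by simp
qed

end

lemma finite_SR_complex: "finite (SR_complex n G)"
  by (rule finite_subset[of _ "Pow {1..n}"]) (auto simp: SR_complex_def)

lemma fvec_SR_complex_ge_2_eq_0_iff:
  "(\<forall>d\<ge>2. fvec (SR_complex n G) d = 0) \<longleftrightarrow> (\<forall>T\<subseteq>{1..n}. card T = 3 \<longrightarrow> (\<exists>g\<in>G. g \<subseteq> T))"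
proof
  assume "\<forall>d\<ge>2. fvec (SR_complex n G) d = 0"
  then have "card {F \<in> SR_complex n G. card F = 3} = 0"
    by (auto simp: fvec_def numeral_3_eq_3)
  then have "{F \<in> SR_complex n G. card F = 3} = {}"
    using finite_SR_complex[of n G] by simp
  then show "\<forall>T\<subseteq>{1..n}. card T = 3 \<longrightarrow> (\<exists>g\<in>G. g \<subseteq> T)"
    unfolding SR_complex_def by blast
next
  assume three: "\<forall>T\<subseteq>{1..n}. card T = 3 \<longrightarrow> (\<exists>g\<in>G. g \<subseteq> T)"
  have "F \<notin> SR_complex n G" if large: "3 \<le> card F" for F
  proof
    assume F: "F \<in> SR_complex n G"
    obtain T where T: "T \<subseteq> F" "card T = 3"
      using obtain_subset_with_card_n[OF large] by metis
    then have "T \<subseteq> {1..n}"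
      using F by (auto simp: SR_complex_def)
    then obtain g where "g \<in> G" "g \<subseteq> T"
      using three T(2) by blast
    with F T(1) show False
      unfolding SR_complex_def by blast
  qed
  then have empty: "{F \<in> SR_complex n G. card F = Suc d} = {}" if "d \<ge> 2" for d
    using that by auto
  show "\<forall>d\<ge>2. fvec (SR_complex n G) d = 0"
  proof (intro allI impI)
    fix d :: nat assume "d \<ge> 2"
    show "fvec (SR_complex n G) d = 0"
      unfolding fvec_def empty[OF \<open>d \<ge> 2\<close>] by simp
  qed
qed

context
  fixes n :: nat and G :: "nat set set"
  assumes edges: "\<And>g. g \<in> G \<Longrightarrow> g \<subseteq> {1..n} \<and> card g = 2"
begin

lemma finite_edges: "finite G"
  using edges by (intro finite_subset[of G "Pow {1..n}"]) auto

lemma finite_edge: "g \<in> G \<Longrightarrow> finite g"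
  using edges by (simp add: card_ge_0_finite)

lemma fvec_facet_complex_vertices: "fvec (facet_complex G) 0 = card (\<Union>G)"
proof -
  have "{F \<in> facet_complex G. card F = Suc 0} = (\<lambda>x. {x}) ` \<Union>G"
    by (auto simp: facet_complex_def card_Suc_eq)
  then show ?thesis
    by (simp add: fvec_def card_image)
qed

lemma fvec_facet_complex_edges: "fvec (facet_complex G) 1 = card G"
proof -
  have "{F \<in> facet_complex G. card F = Suc 1} = G"
  proof (intro equalityI subsetI)
    fix F assume "F \<in> {F \<in> facet_complex G. card F = Suc 1}"
    then obtain g where g: "g \<in> G" "F \<subseteq> g" "card F = 2"
      by (auto simp: facet_complex_def)
    then show "F \<in> G"
      using card_subset_eq[OF finite_edge[OF g(1)] g(2)] edges[OF g(1)] by simp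
  qed (use edges in \<open>auto simp: facet_complex_def\<close>)
  then show ?thesis
    by (simp add: fvec_def)
qed

lemma fvec_facet_complex_ge_2:
  assumes "d \<ge> 2"
  shows "fvec (facet_complex G) d = 0"
proof -
  have "F \<notin> facet_complex G" if "card F = Suc d" for F
  proof
    assume "F \<in> facet_complex G"
    then obtain g where "g \<in> G" "F \<subseteq> g"
      by (auto simp: facet_complex_def)
    then have "card F \<le> 2"
      using card_mono[OF finite_edge] edges by fastforce
    with that assms show False
      by simp
  qed
  then have empty: "{F \<in> facet_complex G. card F = Suc d} = {}"
    by blast
  show ?thesis
    unfolding fvec_def empty by simp
qed

lemma fvec_SR_complex_vertices: "fvec (SR_complex n G) 0 = n"
proof -
  have "\<not> g \<subseteq> {x}" if "g \<in> G" for g x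
    using edges[OF that] card_mono[of "{x}" g] by auto
  then have "{F \<in> SR_complex n G. card F = Suc 0} = (\<lambda>x. {x}) ` {1..n}"
    by (auto simp: SR_complex_def card_Suc_eq)
  then show ?thesis
    by (simp add: fvec_def card_image)
qed

lemma fvec_SR_complex_edges: "fvec (SR_complex n G) 1 = (n choose 2) - card G"
proof -
  have eq_if_sub: "g = A" if "g \<in> G" "g \<subseteq> A" "card A = 2" for g A
    using card_subset_eq[of A g] edges[OF that(1)] that(2,3) by (simp add: card_ge_0_finite)
  have "{F \<in> SR_complex n G. card F = Suc 1} = {A. A \<subseteq> {1..n} \<and> card A = 2} - G"
    using eq_if_sub by (auto simp: SR_complex_def)
  moreover have "G \<subseteq> {A. A \<subseteq> {1..n} \<and> card A = 2}"
    using edges by auto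
  ultimately show ?thesis
    using finite_edges by (simp add: fvec_def card_Diff_subset n_subsets)
qed

end

lemma nat_all_split_0_1: "(\<forall>d::nat. Q d) \<longleftrightarrow> Q 0 \<and> Q 1 \<and> (\<forall>d\<ge>2. Q d)"
  by (metis One_nat_def less_2_cases not_le)

lemma V2_iff:
  "G \<in> V2 n \<longleftrightarrow> (\<forall>g\<in>G. g \<subseteq> {1..n} \<and> card g = 2) \<and> \<Union>G = {1..n} \<and> 2 * card G = n choose 2
     \<and> (\<forall>T\<subseteq>{1..n}. card T = 3 \<longrightarrow> (\<exists>g\<in>G. g \<subseteq> T))"
proof (cases "\<forall>g\<in>G. g \<subseteq> {1..n} \<and> card g = 2")
  case True
  then have edges: "\<And>g. g \<in> G \<Longrightarrow> g \<subseteq> {1..n} \<and> card g = 2"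
    by blast
  have "g = h" if "g \<in> G" "h \<in> G" "g \<subseteq> h" for g h
    using card_subset_eq[OF _ that(3)] edges[OF that(1)] edges[OF that(2)]
    by (simp add: card_ge_0_finite)
  then have "sqfree_gens n G"
    using edges finite_edges[OF edges] by (simp add: sqfree_gens_def)
  then have "G \<in> V2 n \<longleftrightarrow> (\<forall>d. fvec (facet_complex G) d = fvec (SR_complex n G) d)"
    using True by (simp add: V2_def is_f_ideal_def)
  also have "\<dots> \<longleftrightarrow> card (\<Union>G) = n \<and> card G = (n choose 2) - card G
      \<and> (\<forall>d\<ge>2. fvec (SR_complex n G) d = 0)"
    unfolding nat_all_split_0_1[where Q = "\<lambda>d. fvec (facet_complex G) d = fvec (SR_complex n G) d"]
    by (simp add: fvec_facet_complex_vertices[OF edges] fvec_SR_complex_vertices[OF edges]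
        fvec_facet_complex_ge_2[OF edges] fvec_facet_complex_edges[OF edges, unfolded One_nat_def]
        fvec_SR_complex_edges[OF edges, unfolded One_nat_def])
  also have "card (\<Union>G) = n \<longleftrightarrow> \<Union>G = {1..n}"
    using edges card_subset_eq[of "{1..n}" "\<Union>G"] by auto
  also have "card G = (n choose 2) - card G \<longleftrightarrow> 2 * card G = n choose 2"
    by auto
  finally show ?thesis
    using True fvec_SR_complex_ge_2_eq_0_iff[of n G] by simp
next
  case False
  then have "G \<notin> V2 n"
    by (auto simp: V2_def is_f_ideal_def sqfree_gens_def)
  with False show ?thesis
    by blast
qed

lemma card_2_subset_of_3:
  assumes "card g = 2" and "g \<subseteq> {x, y, z}"
  shows "g = {x, y} \<or> g = {y, z} \<or> g = {x, z}"
proof -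
  obtain a b where "g = {a, b}" "a \<noteq> b"
    using assms(1) card_2_iff by metis
  with assms(2) show ?thesis
    by (auto simp: insert_commute)
qed

lemma card_ordered_pairs_of_doubletons:
  assumes "finite S" and "\<And>s. s \<in> S \<Longrightarrow> card s = 2"
  shows "card {(x, y). x \<noteq> y \<and> {x, y} \<in> S} = 2 * card S"
proof -
  have pairs: "{(x, y). x \<noteq> y \<and> {x, y} = s} = {(a, b), (b, a)}"
    if "s = {a, b}" "a \<noteq> b" for s and a b :: 'a
    using that by (auto simp: doubleton_eq_iff)
  have card_pairs: "card {(x, y). x \<noteq> y \<and> {x, y} = s} = 2" if s: "s \<in> S" for s
  proof -
    obtain a b where ab: "s = {a, b}" "a \<noteq> b"
      using assms(2)[OF s] card_2_iff by metis
    then show ?thesis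
      unfolding pairs[OF ab] by simp
  qed
  have "{(x, y). x \<noteq> y \<and> {x, y} \<in> S} = (\<Union>s\<in>S. {(x, y). x \<noteq> y \<and> {x, y} = s})"
    by auto
  also have "card \<dots> = (\<Sum>s\<in>S. card {(x, y). x \<noteq> y \<and> {x, y} = s})"
    using assms(1) card_pairs by (intro card_UN_disjoint) (auto intro: card_ge_0_finite)
  also have "\<dots> = 2 * card S"
    using card_pairs by simp
  finally show ?thesis .
qed

definition compl_adj :: "nat \<Rightarrow> nat set set \<Rightarrow> nat \<Rightarrow> nat \<Rightarrow> bool" where
  "compl_adj n G x y \<longleftrightarrow> x \<in> {1..n} \<and> y \<in> {1..n} \<and> x \<noteq> y \<and> {x, y} \<notin> G"

lemma triangle_free_compl_adj:
  assumes "G \<in> V2 n"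
  shows "triangle_free_graph {1..n} (compl_adj n G)"
proof
  fix x y z
  show "\<not> (compl_adj n G x y \<and> compl_adj n G y z \<and> compl_adj n G x z)"
  proof
    assume adj: "compl_adj n G x y \<and> compl_adj n G y z \<and> compl_adj n G x z"
    then have "{x, y, z} \<subseteq> {1..n}" "card {x, y, z} = 3"
      by (auto simp: compl_adj_def)
    moreover have "\<forall>T\<subseteq>{1..n}. card T = 3 \<longrightarrow> (\<exists>g\<in>G. g \<subseteq> T)"
      using assms by (simp add: V2_iff)
    ultimately obtain g where "g \<in> G" "g \<subseteq> {x, y, z}"
      by blast
    then show False
      using card_2_subset_of_3[of g x y z] adj assms by (auto simp: V2_iff compl_adj_def)
  qed
qed (auto simp: compl_adj_def insert_commute)

lemma card_compl_adj_arcs: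
  assumes "G \<in> V2 n"
  shows "2 * card {(x, y). compl_adj n G x y} = n * (n - 1)"
proof -
  let ?Q = "{1..n} \<times> {1..n} - (\<lambda>x. (x, x)) ` {1..n}"
  let ?R = "{(x, y). x \<noteq> y \<and> {x, y} \<in> G}"
  have edges: "\<And>g. g \<in> G \<Longrightarrow> g \<subseteq> {1..n} \<and> card g = 2" and half: "2 * card G = n choose 2"
    using assms by (auto simp: V2_iff)
  have card_R: "card ?R = n choose 2"
    using card_ordered_pairs_of_doubletons[OF finite_edges[OF edges]] edges half by auto
  have "?R \<subseteq> ?Q"
    using edges by auto
  moreover have "{(x, y). compl_adj n G x y} = ?Q - ?R"
    by (auto simp: compl_adj_def)
  moreover have "card ?Q = n * n - n"
    by (subst card_Diff_subset) (auto simp: card_image inj_on_def card_cartesian_product)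
  ultimately have "card {(x, y). compl_adj n G x y} = n * n - n - (n choose 2)"
    by (simp add: card_Diff_subset finite_subset card_R)
  moreover have "2 * (n choose 2) = n * (n - 1)"
    by (cases "even n") (simp_all add: choose_two)
  ultimately show ?thesis
    by (simp add: diff_mult_distrib2)
qed

lemma cut_bound_iff:
  fixes n l :: nat
  assumes "2 * l \<le> n"
  shows "n * (n - 1) \<le> 4 * l * (n - l) \<longleftrightarrow> (n - 2 * l) ^ 2 \<le> n"
proof -
  have "int (4 * l * (n - l)) = int n ^ 2 - int (n - 2 * l) ^ 2"
    using assms by (simp add: power2_eq_square algebra_simps)
  moreover have "int (n * (n - 1)) = int n ^ 2 - int n"
    by (cases n) (simp_all add: power2_eq_square algebra_simps)
  ultimately show ?thesis
    by (smt (verit) of_nat_le_iff of_nat_power)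
qed

lemma W_set_subset_if_cut:
  assumes "B \<subseteq> {1..n}" and cut: "\<And>x y. compl_adj n G x y \<Longrightarrow> x \<in> B \<longleftrightarrow> y \<notin> B"
  shows "W_set n B \<subseteq> G"
proof
  fix g assume "g \<in> W_set n B"
  then obtain i j where g: "g = {i, j}" "i \<noteq> j"
    and side: "(i \<in> B \<and> j \<in> B) \<or> (i \<in> {1..n} - B \<and> j \<in> {1..n} - B)"
    unfolding W_set_def by blast
  have "\<not> compl_adj n G i j"
    using side cut[of i j] by blast
  moreover have "i \<in> {1..n}" "j \<in> {1..n}"
    using side assms(1) by auto
  ultimately show "g \<in> G"
    using g unfolding compl_adj_def by blast
qed

lemma V2_W_type_or_half_regular:
  assumes G: "G \<in> V2 n"
  obtains l where "2 * l \<le> n" "(n - 2 * l) ^ 2 \<le> n" "G \<in> W_type n l"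
  | "\<And>x. x \<in> {1..n} \<Longrightarrow> 2 * card {y. compl_adj n G x y} + 1 = n"
proof -
  interpret triangle_free_graph "{1..n}" "compl_adj n G"
    using triangle_free_compl_adj[OF G] .
  have "2 * card arcs = card {1..n} * (card {1..n} - 1)"
    using card_compl_adj_arcs[OF G] by (simp add: arcs_def)
  then show thesis
  proof (cases rule: half_dense_cases)
    case (1 B)
    have "G \<in> W_type n (card B)"
      unfolding W_type_def using G 1(1-3) W_set_subset_if_cut[OF 1(1) 1(5)] by blast
    moreover have "(n - 2 * card B) ^ 2 \<le> n"
      using 1(4,6) cut_bound_iff[of "card B" n] by simp
    ultimately show thesis
      using 1(4) that(1) by simp
  next
    case 2
    then show thesis
      using that(2) by (simp add: deg_def nbr_def)
  qed
qed

lemma V2_4k: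
  assumes "k > 0"
  shows "V2 (4 * k) = (\<Union>i\<in>{i::nat. real i \<le> sqrt (real k)}. W_type (4 * k) (2 * k - i))"
proof (intro equalityI subsetI)
  fix G assume G: "G \<in> V2 (4 * k)"
  then show "G \<in> (\<Union>i\<in>{i::nat. real i \<le> sqrt (real k)}. W_type (4 * k) (2 * k - i))"
  proof (cases rule: V2_W_type_or_half_regular)
    case (1 l)
    define i where "i = 2 * k - l"
    have "4 * k - 2 * l = 2 * i"
      using 1(1) by (simp add: i_def)
    then have "i * i \<le> k"
      using 1(2) by (simp add: power2_eq_square)
    then have "real i \<le> sqrt (real k)"
      by (intro real_le_rsqrt) (simp add: power2_eq_square flip: of_nat_mult)
    moreover have "l = 2 * k - i"
      using 1(1) by (simp add: i_def)
    ultimately show ?thesis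
      using 1(3) by blast
  next
    case 2
    have "2 * card {y. compl_adj (4 * k) G 1 y} + 1 = 4 * k"
      using 2[of 1] assms by simp
    moreover have "2 * c + 1 \<noteq> 4 * k" for c :: nat
      by presburger
    ultimately show ?thesis
      by blast
  qed
qed (auto simp: W_type_def)

lemma V2_4k_plus_1:
  assumes "k > 1"
  shows "V2 (4 * k + 1) =
    (\<Union>i\<in>{i::nat. real i \<le> (sqrt (1 + 4 * real k) - 1) / 2}. W_type (4 * k + 1) (2 * k - i))"
proof (intro equalityI subsetI)
  fix G assume G: "G \<in> V2 (4 * k + 1)"
  then show "G \<in> (\<Union>i\<in>{i::nat. real i \<le> (sqrt (1 + 4 * real k) - 1) / 2}.
      W_type (4 * k + 1) (2 * k - i))"
  proof (cases rule: V2_W_type_or_half_regular)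
    case (1 l)
    define i where "i = 2 * k - l"
    have "4 * k + 1 - 2 * l = 2 * i + 1"
      using 1(1) by (simp add: i_def)
    then have "(2 * i + 1) * (2 * i + 1) \<le> 1 + 4 * k"
      using 1(2) by (simp add: power2_eq_square)
    then have "real ((2 * i + 1) * (2 * i + 1)) \<le> real (1 + 4 * k)"
      by (simp only: of_nat_le_iff)
    then have "real (2 * i + 1) ^ 2 \<le> 1 + 4 * real k"
      by (simp only: power2_eq_square of_nat_mult of_nat_add of_nat_1 of_nat_numeral)
    then have "real (2 * i + 1) \<le> sqrt (1 + 4 * real k)"
      by (rule real_le_rsqrt)
    then have "real i \<le> (sqrt (1 + 4 * real k) - 1) / 2"
      by simp
    moreover have "l = 2 * k - i"
      using 1(1) by (simp add: i_def)
    ultimately show ?thesis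
      using 1(3) by blast
  next
    case 2
    interpret triangle_free_graph "{1..4 * k + 1}" "compl_adj (4 * k + 1) G"
      using triangle_free_compl_adj[OF G] .
    have "2 * deg x + 1 = card {1..4 * k + 1}" if "x \<in> {1..4 * k + 1}" for x
      unfolding deg_def nbr_def using 2[OF that] by simp
    then have "card {1..4 * k + 1} \<le> 5"
      by (rule card_V_le_5_if_half_regular)
    then show ?thesis
      using assms by simp
  qed
qed (auto simp: W_type_def)

lemma image_1_to_5: "f ` {1..5::nat} = {f 1, f 2, f 3, f 4, f 5}"
proof -
  have "{1..5::nat} = {1, 2, 3, 4, 5}"
    by auto
  then show ?thesis
    by simp
qed

lemma C5_edges_eq: "(\<lambda>i. {p i, p (i mod 5 + 1)}) ` {1..5::nat} =
    {{p 1, p 2}, {p 2, p 3}, {p 3, p 4}, {p 4, p 5}, {p 5, p 1}}"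
proof -
  have "(1::nat) mod 5 + 1 = 2" "(2::nat) mod 5 + 1 = 3" "(3::nat) mod 5 + 1 = 4"
    "(4::nat) mod 5 + 1 = 5" "(5::nat) mod 5 + 1 = 1"
    by simp_all
  then show ?thesis
    by (simp only: image_1_to_5)
qed

lemma C5E:
  assumes "G \<in> C5"
  obtains a b c d e where "distinct [a, b, c, d, e]" "{a, b, c, d, e} = {1..5}"
    "G = {{a, b}, {b, c}, {c, d}, {d, e}, {e, a}}"
proof -
  obtain p where p: "bij_betw p {1..5::nat} {1..5}"
    and G: "G = (\<lambda>i. {p i, p (i mod 5 + 1)}) ` {1..5}"
    using assms by (auto simp: C5_def)
  have V: "{p 1, p 2, p 3, p 4, p 5} = {1..5}"
    using bij_betw_imp_surj_on[OF p] by (simp only: image_1_to_5)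
  then have "distinct [p 1, p 2, p 3, p 4, p 5]"
    by (intro card_distinct) simp
  then show thesis
    using that V unfolding G C5_edges_eq by blast
qed

lemma pentagon_in_C5:
  assumes "{a, b, c, d, e} = {1..5}"
  shows "{{a, b}, {b, c}, {c, d}, {d, e}, {e, a}} \<in> C5"
proof -
  define p where "p i = [a, b, c, d, e] ! (i - 1)" for i :: nat
  have p: "p 1 = a" "p 2 = b" "p 3 = c" "p 4 = d" "p 5 = e"
    by (simp_all add: p_def numeral_eq_Suc)
  have "p ` {1..5} = {1..5}"
    unfolding image_1_to_5 p assms ..
  then have "bij_betw p {1..5} {1..5}"
    by (simp add: bij_betw_def eq_card_imp_inj_on)
  moreover have "{{a, b}, {b, c}, {c, d}, {d, e}, {e, a}} = (\<lambda>i. {p i, p (i mod 5 + 1)}) ` {1..5}"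
    unfolding C5_edges_eq p ..
  ultimately show ?thesis
    unfolding C5_def by blast
qed

lemma card_pentagon:
  assumes "distinct [a, b, c, d, e]"
  shows "card {{a, b}, {b, c}, {c, d}, {d, e}, {e, a}} = 5"
  using assms by (auto simp: card_insert_if doubleton_eq_iff)

lemma pentagon_in_V2:
  assumes distinct: "distinct [a, b, c, d, e]" and V: "{a, b, c, d, e} = {1..5}"
  shows "{{a, b}, {b, c}, {c, d}, {d, e}, {e, a}} \<in> V2 5"
proof -
  let ?G = "{{a, b}, {b, c}, {c, d}, {d, e}, {e, a}}"
  have "\<forall>g\<in>?G. g \<subseteq> {1..5} \<and> card g = 2"
    using distinct V[symmetric] by auto
  moreover have "\<Union>?G = {1..5}"
    using V by auto
  moreover have "2 * card ?G = 5 choose 2"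
    using card_pentagon[OF distinct] by (simp add: choose_two)
  moreover have "\<exists>g\<in>?G. g \<subseteq> T" if T: "T \<subseteq> {1..5}" "card T = 3" for T
  proof -
    obtain x y z where xyz: "T = {x, y, z}" "x \<noteq> y" "y \<noteq> z" "x \<noteq> z"
      using T(2) by (auto simp: card_3_iff)
    then have "x \<in> {a, b, c, d, e}" "y \<in> {a, b, c, d, e}" "z \<in> {a, b, c, d, e}"
      using T(1) V by auto
    then show ?thesis
      using xyz distinct by auto
  qed
  ultimately show ?thesis
    unfolding V2_iff by blast
qed

lemma C5_if_V2_half_regular:
  assumes G: "G \<in> V2 5"
    and half_reg: "\<And>x. x \<in> {1..5} \<Longrightarrow> 2 * card {y. compl_adj 5 G x y} + 1 = 5"
  shows "G \<in> C5"
proof -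
  interpret triangle_free_graph "{1..5::nat}" "compl_adj 5 G"
    using triangle_free_compl_adj[OF G] .
  have deg: "deg x = 2" if "x \<in> {1..5}" for x
    unfolding deg_def nbr_def using half_reg[OF that] by simp
  have "card {1..5::nat} = 5"
    by simp
  then obtain a b c d e where distinct: "distinct [a, b, c, d, e]"
    and V: "{1..5} = {a, b, c, d, e}"
    and nbrs: "nbr a = {e, b}" "nbr b = {a, c}" "nbr c = {b, d}" "nbr d = {c, e}" "nbr e = {d, a}"
    using deg by (rule five_cycle)
  have in_G_iff: "{x, y} \<in> G \<longleftrightarrow> y \<notin> nbr x"
    if "x \<in> {1..5}" "y \<in> {1..5}" "x \<noteq> y" for x y
    using that by (simp add: compl_adj_def)
  have mem: "a \<in> {1..5}" "b \<in> {1..5}" "c \<in> {1..5}" "d \<in> {1..5}" "e \<in> {1..5}"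
    unfolding V by simp_all
  have "{{a, c}, {c, e}, {e, b}, {b, d}, {d, a}} \<subseteq> G"
    using in_G_iff[OF mem(1,3)] in_G_iff[OF mem(3,5)] in_G_iff[OF mem(5,2)]
      in_G_iff[OF mem(2,4)] in_G_iff[OF mem(4,1)] distinct nbrs
    by (auto simp del: mem_nbr_iff)
  moreover have "card G = card {{a, c}, {c, e}, {e, b}, {b, d}, {d, a}}"
  proof -
    have "distinct [a, c, e, b, d]"
      using distinct by auto
    then show ?thesis
      using G by (simp add: V2_iff card_pentagon choose_two)
  qed
  ultimately have G_eq: "G = {{a, c}, {c, e}, {e, b}, {b, d}, {d, a}}"
    using finite_edges G by (metis card_subset_eq V2_iff)
  have "{a, c, e, b, d} = {1..5}"
    using V by auto
  then have "{{a, c}, {c, e}, {e, b}, {b, d}, {d, a}} \<in> C5"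
    by (rule pentagon_in_C5)
  then show ?thesis
    unfolding G_eq .
qed

lemma V2_5: "V2 5 = W_type 5 2 \<union> C5"
proof (intro equalityI subsetI)
  fix G assume G: "G \<in> V2 5"
  then show "G \<in> W_type 5 2 \<union> C5"
  proof (cases rule: V2_W_type_or_half_regular)
    case (1 l)
    then have "l = 0 \<or> l = 1 \<or> l = 2"
      by auto
    then have "l = 2"
      using 1(2) by auto
    then show ?thesis
      using 1(3) by simp
  next
    case 2
    then show ?thesis
      using C5_if_V2_half_regular[OF G 2] by simp
  qed
next
  fix G assume "G \<in> W_type 5 2 \<union> C5"
  then show "G \<in> V2 5"
  proof
    assume "G \<in> C5"
    then show ?thesis
      by (elim C5E) (simp add: pentagon_in_V2)
  qed (simp add: W_type_def)
qed

lemma V2_empty_if_odd_choose_2: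
  assumes "odd (n choose 2)"
  shows "V2 n = {}"
proof (intro equals0I)
  fix G assume "G \<in> V2 n"
  then have "2 * card G = n choose 2"
    by (simp add: V2_iff)
  with assms show False
    by (metis dvd_triv_left)
qed

theorem theorem4p8:
  fixes k :: nat
  assumes "k > 0"
  shows "V2 (4 * k) = (\<Union>i\<in>{i::nat. real i \<le> sqrt (real k)}. W_type (4 * k) (2 * k - i))
    \<and> (k \<noteq> 1 \<longrightarrow> V2 (4 * k + 1) =
           (\<Union>i\<in>{i::nat. real i \<le> (sqrt (1 + 4 * real k) - 1) / 2}. W_type (4 * k + 1) (2 * k - i)))
    \<and> V2 5 = W_type 5 2 \<union> C5
    \<and> V2 (4 * k + 2) = {}
    \<and> V2 (4 * k + 3) = {}"
proof (intro conjI impI)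
  show "k \<noteq> 1 \<Longrightarrow> V2 (4 * k + 1) =
      (\<Union>i\<in>{i::nat. real i \<le> (sqrt (1 + 4 * real k) - 1) / 2}. W_type (4 * k + 1) (2 * k - i))"
    using assms by (intro V2_4k_plus_1) simp
  have "(4 * k + 2) choose 2 = (2 * k + 1) * (4 * k + 1)"
    "(4 * k + 3) choose 2 = (4 * k + 3) * (2 * k + 1)"
    by (simp_all add: choose_two algebra_simps)
  then show "V2 (4 * k + 2) = {}" "V2 (4 * k + 3) = {}"
    by (simp_all add: V2_empty_if_odd_choose_2)
  show "V2 (4 * k) = (\<Union>i\<in>{i::nat. real i \<le> sqrt (real k)}. W_type (4 * k) (2 * k - i))"
    using assms by (rule V2_4k)
  show "V2 5 = W_type 5 2 \<union> C5"
    by (rule V2_5)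
qed

end
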